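(* Let $(X,\tau)$ be a metrizable topological space, let $W\subseteq X$ be such that $\operatorname{den}(W)$ is a cardinal of uncountable cofinality, and let $D$ be a finite family of metrics on $X$ each of which induces the topology $\tau$. Then there exists $\varepsilon_0>0$ such that for every $\varepsilon\in\,]0,\varepsilon_0[$ the values $\hat{\mathcal N}_\varepsilon(W)$, $\hat{\mathcal N}^X_\varepsilon(W)$, $\hat{\mathcal M}_\varepsilon(W)$ and $\mathcal M^*_\varepsilon(W)$, computed with respect to $d\in D$, do not depend on the choice of $d\in D$.
   Context: $\operatorname{den}(W)$ is the minimal cardinality of a dense subset of $W$ (a topological quantity). Cofinality of a cardinal $\beta$: least ordinal $\alpha$ admitting a strictly increasing cofinal map $\alpha\to\beta$. For a metric $d$: $B(c,r)=\{x:d(x,c)\le r\}$; $C$ is an $\varepsilon$-net for $W$ if $W\subseteq\bigcup_{c\in C}B(c,\varepsilon)$; $A$ is $\varepsilon$-distinguishable if $d(x,y)>\varepsilon$ for distinct $x,y\in A$. $\hat{\mathcal N}^A_\varepsilon(W)$ is the minimal cardinality of an $\varepsilon$-net $C\subseteq A$ for $W$; $\hat{\mathcal N}_\varepsilon(W):=\hat{\mathcal N}^W_\varepsilon(W)$; $\hat{\mathcal M}_\varepsilon(W)$ is the smallest cardinality of an $\varepsilon$-distinguishable $A\subseteq W$ that is maximal under inclusion among $\varepsilon$-distinguishable subsets of $W$; $\mathcal M^*_\varepsilon(W)$ is the smallest cardinal $\ge\operatorname{card}(A)$ for every $\varepsilon$-distinguishable $A\subseteq W$. *)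

theory Defs
  imports "HOL-Analysis.Analysis"
begin

text \<open>Cardinals are represented (as in HOL's BNF cardinal library) by well-orders,
  compared with \<open>\<le>o\<close> / \<open>=o\<close>; the cardinality of a set A is \<open>card_of A\<close>.\<close>

text \<open>Cofinality of a cardinal (well-order) r is at most omega iff some ordinal
  alpha \<le> omega (represented by a well-order on a subset of nat) admits a strictly
  increasing cofinal map into r.\<close>
definition cofinality_le_omega :: "'b rel \<Rightarrow> bool" where
  "cofinality_le_omega r \<longleftrightarrow>
     (\<exists>(\<alpha> :: nat rel) (f :: nat \<Rightarrow> 'b).
        Well_order \<alpha> \<and> (\<alpha>, natLeq) \<in> ordLeq \<and>
        f ` Field \<alpha> \<subseteq> Field r \<and>
        (\<forall>i\<in>Field \<alpha>. \<forall>j\<in>Field \<alpha>. (i, j) \<in> \<alpha> \<and> i \<noteq> j \<longrightarrow> (f i, f j) \<in> r \<and> f i \<noteq> f j) \<and>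
        (\<forall>b\<in>Field r. \<exists>i\<in>Field \<alpha>. (b, f i) \<in> r))"

definition uncountable_cofinality :: "'b rel \<Rightarrow> bool" where
  "uncountable_cofinality r \<longleftrightarrow> \<not> cofinality_le_omega r"

definition dense_in :: "'a topology \<Rightarrow> 'a set \<Rightarrow> 'a set \<Rightarrow> bool" where
  "dense_in T W D \<longleftrightarrow> D \<subseteq> W \<and> W \<subseteq> T closure_of D"

definition den :: "'a topology \<Rightarrow> 'a set \<Rightarrow> 'a rel" where
  "den T W = card_of (SOME D. dense_in T W D \<and>
      (\<forall>D'. dense_in T W D' \<longrightarrow> (card_of D, card_of D') \<in> ordLeq))"

definition cball_d :: "'a set \<Rightarrow> ('a \<Rightarrow> 'a \<Rightarrow> real) \<Rightarrow> 'a \<Rightarrow> real \<Rightarrow> 'a set" where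
  "cball_d X d c r = {x \<in> X. d x c \<le> r}"

definition is_net :: "'a set \<Rightarrow> ('a \<Rightarrow> 'a \<Rightarrow> real) \<Rightarrow> real \<Rightarrow> 'a set \<Rightarrow> 'a set \<Rightarrow> bool" where
  "is_net X d \<epsilon> W C \<longleftrightarrow> W \<subseteq> (\<Union>c\<in>C. cball_d X d c \<epsilon>)"

definition distinguishable :: "('a \<Rightarrow> 'a \<Rightarrow> real) \<Rightarrow> real \<Rightarrow> 'a set \<Rightarrow> bool" where
  "distinguishable d \<epsilon> A \<longleftrightarrow> (\<forall>x\<in>A. \<forall>y\<in>A. x \<noteq> y \<longrightarrow> d x y > \<epsilon>)"

definition N_hat :: "'a set \<Rightarrow> ('a \<Rightarrow> 'a \<Rightarrow> real) \<Rightarrow> real \<Rightarrow> 'a set \<Rightarrow> 'a set \<Rightarrow> 'a rel" where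
  "N_hat X d \<epsilon> A W = card_of (SOME C. C \<subseteq> A \<and> is_net X d \<epsilon> W C \<and>
      (\<forall>C'. C' \<subseteq> A \<and> is_net X d \<epsilon> W C' \<longrightarrow> (card_of C, card_of C') \<in> ordLeq))"

definition maximal_distinguishable :: "('a \<Rightarrow> 'a \<Rightarrow> real) \<Rightarrow> real \<Rightarrow> 'a set \<Rightarrow> 'a set \<Rightarrow> bool" where
  "maximal_distinguishable d \<epsilon> W A \<longleftrightarrow> A \<subseteq> W \<and> distinguishable d \<epsilon> A \<and>
      (\<forall>B. A \<subseteq> B \<and> B \<subseteq> W \<and> distinguishable d \<epsilon> B \<longrightarrow> B = A)"

definition M_hat :: "('a \<Rightarrow> 'a \<Rightarrow> real) \<Rightarrow> real \<Rightarrow> 'a set \<Rightarrow> 'a rel" where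
  "M_hat d \<epsilon> W = card_of (SOME A. maximal_distinguishable d \<epsilon> W A \<and>
      (\<forall>A'. maximal_distinguishable d \<epsilon> W A' \<longrightarrow> (card_of A, card_of A') \<in> ordLeq))"

text \<open>\<open>M_star\<close>: the smallest cardinal \<ge> card A for every \<epsilon>-distinguishable A \<subseteq> W.
  All such cardinals are \<le> card W, so cardinals on the type 'a suffice.\<close>
definition is_M_star :: "('a \<Rightarrow> 'a \<Rightarrow> real) \<Rightarrow> real \<Rightarrow> 'a set \<Rightarrow> 'a rel \<Rightarrow> bool" where
  "is_M_star d \<epsilon> W \<kappa> \<longleftrightarrow> Card_order \<kappa> \<and>
      (\<forall>A. A \<subseteq> W \<and> distinguishable d \<epsilon> A \<longrightarrow> (card_of A, \<kappa>) \<in> ordLeq) \<and>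
      (\<forall>\<kappa>' :: 'a rel. Card_order \<kappa>' \<and>
          (\<forall>A. A \<subseteq> W \<and> distinguishable d \<epsilon> A \<longrightarrow> (card_of A, \<kappa>') \<in> ordLeq) \<longrightarrow> (\<kappa>, \<kappa>') \<in> ordLeq)"

definition M_star :: "('a \<Rightarrow> 'a \<Rightarrow> real) \<Rightarrow> real \<Rightarrow> 'a set \<Rightarrow> 'a rel" where
  "M_star d \<epsilon> W = (SOME \<kappa>. is_M_star d \<epsilon> W \<kappa>)"

end

theory Submission
  imports Defs
begin

unbundle cardinal_syntax

(*
  Fix one metric d inducing the topology and let \<kappa> = den(W).
  (1) Packing bound: an \<epsilon>-distinguishable subset of W injects into a least dense
      subset of W (send a point to a dense point at distance < \<epsilon>/2), so its size
      is \<le> \<kappa>.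
  (2) Covering bound: for all small \<epsilon>, every \<epsilon>-net of W has size \<ge> \<kappa>.  Otherwise
      there are nets C_n of radius < 1/(n+1) with |C_n| < \<kappa>; choosing one point of W
      near each centre yields a dense subset of W of size |\<Union>n E_n| < \<kappa>, because a
      cardinal of uncountable cofinality is not a countable union of smaller sets.
  (3) A maximal \<epsilon>-distinguishable subset of W is an \<epsilon>-net of W, so it attains both
      bounds; hence all four invariants equal \<kappa> for all sufficiently small \<epsilon> > 0
      (i.e. eventually in the filter at_right 0).
  As \<kappa> does not depend on d and D is finite, these conditions hold simultaneously.
*)

text \<open>Any well-order obtained by restricting the natural order to a set of naturals
  has order type at most \<omega>; this is what makes such restrictions admissible
  domains in the definition of cofinality \<le> \<omega>.\<close>
lemma Restr_natLeq_ordLeq: "Restr natLeq S \<le>o natLeq"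
proof (rule ccontr)
  assume "\<not> Restr natLeq S \<le>o natLeq"
  hence "natLeq <o Restr natLeq S"
    using not_ordLeq_iff_ordLess[OF natLeq_Well_order Well_order_Restr[OF natLeq_Well_order]]
    by blast
  then obtain a where "(natLeq, Restr (Restr natLeq S) (underS (Restr natLeq S) a)) \<in> ordIso"
    using ordLess_iff_ordIso_Restr[OF Well_order_Restr[OF natLeq_Well_order] natLeq_Well_order]
    by blast
  hence "|Field natLeq| \<le>o |Field (Restr (Restr natLeq S) (underS (Restr natLeq S) a))|"
    using card_of_mono2 ordIso_iff_ordLeq by blast
  moreover have "Field (Restr (Restr natLeq S) (underS (Restr natLeq S) a)) \<subseteq> {..a}"
    unfolding Field_def underS_def by (auto simp: natLeq_def)
  ultimately have "finite (Field (natLeq :: nat rel))"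
    using card_of_ordLeq_finite finite_subset by blast
  thus False by (simp add: Field_natLeq)
qed

text \<open>A sequence that is cofinal in a well-order witnesses cofinality \<le> \<omega>: its
  strict records (terms exceeding all earlier terms) form a strictly increasing
  cofinal subsequence indexed by a set of naturals.\<close>
lemma cofinal_sequence_imp_cofinality_le_omega:
  fixes h :: "nat \<Rightarrow> 'b"
  assumes wo: "Well_order r"
    and cofinal: "\<forall>b\<in>Field r. \<exists>n. h n \<in> Field r \<and> (b, h n) \<in> r"
  shows "cofinality_le_omega r"
proof -
  have tr: "trans r"
    using wo by (simp add: well_order_on_def linear_order_on_def partial_order_on_def preorder_on_def)
  have tot: "\<And>x y. x \<in> Field r \<Longrightarrow> y \<in> Field r \<Longrightarrow> (x, y) \<in> r \<or> (y, x) \<in> r"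
    using wo wo_rel.TOTALS[of r] unfolding wo_rel_def by blast
  define S where "S = {n. h n \<in> Field r \<and> (\<forall>m<n. h m \<in> Field r \<longrightarrow> (h m, h n) \<in> r \<and> h m \<noteq> h n)}"
  have FS: "Field (Restr natLeq S) = S"
    using Refl_Field_Restr[of natLeq S] natLeq_Refl by (simp add: Field_natLeq)
  have records_cofinal: "\<exists>i\<in>S. (b, h i) \<in> r" if b: "b \<in> Field r" for b
  proof -
    obtain n where n: "h n \<in> Field r" "(b, h n) \<in> r" using cofinal b by blast
    define m0 where "m0 = (LEAST m. h m \<in> Field r \<and> (h n, h m) \<in> r)"
    have "h n \<in> Field r \<and> (h n, h n) \<in> r" using n tot by blast
    hence m0: "h m0 \<in> Field r \<and> (h n, h m0) \<in> r"
      unfolding m0_def by (rule LeastI)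
    have "(h m, h m0) \<in> r \<and> h m \<noteq> h m0" if "m < m0" "h m \<in> Field r" for m
    proof -
      have not_above: "(h n, h m) \<notin> r"
        using not_less_Least[OF that(1)[unfolded m0_def]] that(2) by blast
      hence "(h m, h n) \<in> r" using tot[OF that(2) n(1)] by blast
      hence "(h m, h m0) \<in> r" using m0 tr by (meson transD)
      moreover have "h m \<noteq> h m0" using not_above m0 by metis
      ultimately show ?thesis by blast
    qed
    hence "m0 \<in> S" using m0 unfolding S_def by blast
    moreover have "(b, h m0) \<in> r" using n m0 tr by (meson transD)
    ultimately show ?thesis by blast
  qed
  show ?thesis
    unfolding cofinality_le_omega_def
  proof (intro exI conjI)
    show "Well_order (Restr natLeq S)" by (rule Well_order_Restr[OF natLeq_Well_order])
    show "Restr natLeq S \<le>o natLeq" by (rule Restr_natLeq_ordLeq)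
    show "h ` Field (Restr natLeq S) \<subseteq> Field r" unfolding FS by (auto simp: S_def)
    show "\<forall>i\<in>Field (Restr natLeq S). \<forall>j\<in>Field (Restr natLeq S).
        (i, j) \<in> Restr natLeq S \<and> i \<noteq> j \<longrightarrow> (h i, h j) \<in> r \<and> h i \<noteq> h j"
      unfolding FS by (auto simp: S_def natLeq_def)
    show "\<forall>b\<in>Field r. \<exists>i\<in>Field (Restr natLeq S). (b, h i) \<in> r"
      unfolding FS using records_cofinal by blast
  qed
qed

lemma uncountable_cofinality_bounded:
  fixes h :: "nat \<Rightarrow> 'b"
  assumes uc: "uncountable_cofinality r" and wo: "Well_order r"
  shows "\<exists>b\<in>Field r. \<forall>n. h n \<in> Field r \<longrightarrow> (h n, b) \<in> r \<and> h n \<noteq> b"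
proof (rule ccontr)
  assume "\<not> ?thesis"
  hence "\<forall>b\<in>Field r. \<exists>n. h n \<in> Field r \<and> (b, h n) \<in> r"
    using wo_rel.TOTALS[of r] wo unfolding wo_rel_def by blast
  thus False
    using cofinal_sequence_imp_cofinality_le_omega[OF wo] uc
    unfolding uncountable_cofinality_def by blast
qed

text \<open>A well-order of uncountable cofinality is longer than \<omega>: otherwise its field
  would be countable and an enumeration of it would be cofinal.\<close>
lemma natLeq_ordLess_uncountable_cofinality:
  assumes uc: "uncountable_cofinality r" and wo: "Well_order r"
  shows "natLeq <o r"
proof (rule ccontr)
  assume "\<not> natLeq <o r"
  hence "r \<le>o natLeq" using not_ordLess_iff_ordLeq[OF wo natLeq_Well_order] by blast
  hence "|Field r| \<le>o |UNIV :: nat set|" using card_of_mono2 Field_natLeq by fastforce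
  then obtain f :: "_ \<Rightarrow> nat" where "inj_on f (Field r)"
    using card_of_ordLeq[of "Field r" "UNIV :: nat set"] by blast
  hence cnt: "countable (Field r)" unfolding countable_def by blast
  show False
  proof (cases "Field r = {}")
    case True
    thus False using uncountable_cofinality_bounded[OF uc wo, of "\<lambda>_. undefined"] by blast
  next
    case False
    obtain b where b: "b \<in> Field r" and "\<forall>n. from_nat_into (Field r) n \<in> Field r \<longrightarrow>
        (from_nat_into (Field r) n, b) \<in> r \<and> from_nat_into (Field r) n \<noteq> b"
      using uncountable_cofinality_bounded[OF uc wo, of "from_nat_into (Field r)"] by blast
    moreover obtain n where "from_nat_into (Field r) n = b"
      using b range_from_nat_into[OF False cnt] by (metis imageE)
    ultimately show False by blast
  qed
qed

text \<open>All the pieces live below one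
  initial segment \<open>underS r b\<close>, which is strictly smaller than r.\<close>
lemma countable_union_ordLess_uncountable_cofinality:
  fixes C :: "nat \<Rightarrow> 'c set" and r :: "'b rel"
  assumes uc: "uncountable_cofinality r" and co: "Card_order r" and less: "\<And>n. |C n| <o r"
  shows "|\<Union>n. C n| <o r"
proof -
  have wo: "Well_order r" using co unfolding card_order_on_def by blast
  have tr: "trans r" and antis: "antisym r" and rfl: "Refl r"
    using wo by (auto simp: well_order_on_def linear_order_on_def partial_order_on_def preorder_on_def)
  have "\<forall>n. \<exists>a\<in>Field r. ( |C n|, Restr r (underS r a)) \<in> ordIso"
    using less ordLess_iff_ordIso_Restr[OF wo card_of_Well_order] by blast
  then obtain h where h: "\<And>n. h n \<in> Field r" "\<And>n. ( |C n|, Restr r (underS r (h n))) \<in> ordIso"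
    by metis
  have sub: "Field (Restr r (underS r a)) = underS r a" if "a \<in> Field r" for a
  proof -
    have "underS r a \<subseteq> Field r" unfolding underS_def Field_def by blast
    thus ?thesis using Refl_Field_Restr rfl by blast
  qed
  have C_below: "|C n| \<le>o |underS r (h n)|" for n
  proof -
    have "|Field |C n|| \<le>o |Field (Restr r (underS r (h n)))|"
      using card_of_mono2 h(2) ordIso_iff_ordLeq by blast
    thus ?thesis using sub[OF h(1)] by (simp add: Field_card_of)
  qed
  obtain b where b: "b \<in> Field r" and hb: "\<forall>n. h n \<in> Field r \<longrightarrow> (h n, b) \<in> r \<and> h n \<noteq> b"
    using uncountable_cofinality_bounded[OF uc wo, of h] by blast
  have "underS r (h n) \<subseteq> underS r b" for n
  proof
    fix x assume "x \<in> underS r (h n)"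
    hence "(x, h n) \<in> r" "x \<noteq> h n" unfolding underS_def by auto
    moreover have "(h n, b) \<in> r" "h n \<noteq> b" using hb h(1) by auto
    ultimately show "x \<in> underS r b" unfolding underS_def using tr antis
      by (auto dest: transD antisymD)
  qed
  hence "|C n| \<le>o |underS r b <+> (UNIV :: nat set)|" for n
    using C_below card_of_mono1 card_of_Plus1 ordLeq_transitive by metis
  moreover have inf: "\<not> finite (underS r b <+> (UNIV :: nat set))"
    using finite_subset[of "Inr ` UNIV" "underS r b <+> (UNIV :: nat set)"]
      finite_imageD[of Inr "UNIV :: nat set"] by auto
  ultimately have union_le: "|\<Union>n. C n| \<le>o |underS r b <+> (UNIV :: nat set)|"
    using card_of_UNION_ordLeq_infinite[OF inf card_of_Plus2, of C] by simp
  have nl: "natLeq <o r" by (rule natLeq_ordLess_uncountable_cofinality[OF uc wo])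
  have "\<not> finite (Field r)"
  proof
    assume "finite (Field r)"
    moreover have "|Field natLeq| \<le>o |Field r|"
      using card_of_mono2 ordLess_imp_ordLeq[OF nl] by blast
    ultimately show False using card_of_ordLeq_finite Field_natLeq by (metis infinite_UNIV_nat)
  qed
  hence "|underS r b <+> (UNIV :: nat set)| <o r"
    using card_of_Plus_ordLess_infinite_Field[OF _ co card_of_underS[OF co b]
        ordIso_ordLess_trans[OF card_of_nat nl]] by blast
  thus ?thesis using union_le ordLeq_ordLess_trans by blast
qed

text \<open>The cardinal invariants are defined by Hilbert choice of a set of least
  cardinality.  If some set has property P, such a least set exists (cardinals are
  well-ordered) and the chosen set is one.\<close>
lemma least_card_witness:
  fixes P :: "'a set \<Rightarrow> bool"
  assumes "P A0"
  defines "A \<equiv> SOME A. P A \<and> (\<forall>B. P B \<longrightarrow> |A| \<le>o |B| )"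
  shows "P A" and "\<And>B. P B \<Longrightarrow> |A| \<le>o |B|"
proof -
  have "card_of ` {A. P A} \<noteq> {}" using assms(1) by blast
  then obtain A1 where "P A1" "\<forall>B. P B \<longrightarrow> |A1| \<le>o |B|"
    using exists_minim_Card_order[of "card_of ` {A. P A}"] card_of_Card_order by blast
  hence "P A \<and> (\<forall>B. P B \<longrightarrow> |A| \<le>o |B| )"
    unfolding A_def by (rule someI[where x = A1, OF conjI])
  thus "P A" and "\<And>B. P B \<Longrightarrow> |A| \<le>o |B|" by blast+
qed

lemma least_card_eq:
  fixes P :: "'a set \<Rightarrow> bool"
  assumes "P A0" and "|A0| \<le>o \<kappa>" and "\<And>B. P B \<Longrightarrow> \<kappa> \<le>o |B|"
  shows "( |SOME A. P A \<and> (\<forall>B. P B \<longrightarrow> |A| \<le>o |B| )|, \<kappa>) \<in> ordIso"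
  using least_card_witness[of P A0] assms ordLeq_transitive ordIso_iff_ordLeq by blast

text \<open>\<open>den\<close> is the size of a least dense subset; any subset is dense in itself.\<close>
lemma den_witness:
  assumes "W \<subseteq> topspace T"
  obtains D0 where "dense_in T W D0" and "den T W = |D0|"
    and "\<And>D'. dense_in T W D' \<Longrightarrow> den T W \<le>o |D'|"
proof -
  have "dense_in T W W" unfolding dense_in_def using closure_of_subset[OF assms] by blast
  note least = least_card_witness[of "dense_in T W", OF this]
  show ?thesis
    by (rule that[OF least(1) den_def]) (unfold den_def, rule least(2))
qed

text \<open>Zorn's lemma: maximal \<epsilon>-distinguishable subsets of W exist, since the union of
  a chain of \<epsilon>-distinguishable sets is \<epsilon>-distinguishable.\<close>
lemma maximal_distinguishable_exists: "\<exists>A. maximal_distinguishable d \<epsilon> W A"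
proof -
  let ?F = "{B. B \<subseteq> W \<and> distinguishable d \<epsilon> B}"
  have "\<Union>Ch \<in> ?F" if Ch: "Ch \<in> chains ?F" for Ch
  proof -
    have sub: "Ch \<subseteq> ?F" and ch: "chain\<^sub>\<subseteq> Ch" using Ch unfolding chains_def by auto
    have "d x y > \<epsilon>" if "B1 \<in> Ch" "B2 \<in> Ch" "x \<in> B1" "y \<in> B2" "x \<noteq> y" for x y B1 B2
    proof -
      have "B1 \<subseteq> B2 \<or> B2 \<subseteq> B1" using ch that(1,2) unfolding chain_subset_def by blast
      hence "x \<in> B1 \<and> y \<in> B1 \<or> x \<in> B2 \<and> y \<in> B2" using that(3,4) by blast
      moreover have "distinguishable d \<epsilon> B1" "distinguishable d \<epsilon> B2" using sub that(1,2) by blast+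
      ultimately show ?thesis using that(5) unfolding distinguishable_def by blast
    qed
    hence "distinguishable d \<epsilon> (\<Union>Ch)" unfolding distinguishable_def by blast
    thus ?thesis using sub by blast
  qed
  then obtain A where "A \<in> ?F" "\<forall>B\<in>?F. A \<subseteq> B \<longrightarrow> B = A" using Zorn_Lemma[of ?F] by blast
  thus ?thesis unfolding maximal_distinguishable_def by blast
qed

lemma M_star_eq:
  fixes \<kappa> :: "'a rel" and W :: "'a set"
  assumes co: "Card_order \<kappa>"
    and upper: "\<And>A. A \<subseteq> W \<Longrightarrow> distinguishable d \<epsilon> A \<Longrightarrow> |A| \<le>o \<kappa>"
    and A0: "A0 \<subseteq> W" "distinguishable d \<epsilon> A0" "\<kappa> \<le>o |A0|"
  shows "(M_star d \<epsilon> W, \<kappa>) \<in> ordIso"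
proof -
  have \<kappa>: "is_M_star d \<epsilon> W \<kappa>"
    unfolding is_M_star_def using co upper A0 ordLeq_transitive by blast
  hence "is_M_star d \<epsilon> W (M_star d \<epsilon> W)" unfolding M_star_def by (rule someI)
  with \<kappa> show ?thesis unfolding is_M_star_def ordIso_iff_ordLeq by blast
qed

definition invariants_equal :: "'a set \<Rightarrow> ('a \<Rightarrow> 'a \<Rightarrow> real) \<Rightarrow> real \<Rightarrow> 'a set \<Rightarrow> 'a rel \<Rightarrow> bool"
  where "invariants_equal X d \<epsilon> W \<kappa> \<longleftrightarrow>
    (N_hat X d \<epsilon> W W, \<kappa>) \<in> ordIso \<and> (N_hat X d \<epsilon> X W, \<kappa>) \<in> ordIso \<and>
    (M_hat d \<epsilon> W, \<kappa>) \<in> ordIso \<and> (M_star d \<epsilon> W, \<kappa>) \<in> ordIso"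

context Metric_space
begin

text \<open>Packing bound: an \<epsilon>-distinguishable set A in the closure of D injects into D,
  by sending each point of A to a point of D at distance < \<epsilon>/2.\<close>
lemma distinguishable_card_le_dense:
  assumes e: "0 < \<epsilon>" and A: "A \<subseteq> mtopology closure_of D" "distinguishable d \<epsilon> A"
  shows "|A| \<le>o |D|"
proof -
  have "\<exists>y\<in>D. y \<in> mball a (\<epsilon>/2)" if "a \<in> A" for a
  proof -
    have "\<forall>r>0. \<exists>y\<in>D. y \<in> mball a r"
      using A(1) that unfolding metric_closure_of by blast
    thus ?thesis using e by (meson half_gt_zero)
  qed
  then obtain g where g: "\<And>a. a \<in> A \<Longrightarrow> g a \<in> D \<and> g a \<in> mball a (\<epsilon>/2)" by metis
  have "inj_on g A"
  proof
    fix a a' assume a: "a \<in> A" "a' \<in> A" "g a = g a'"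
    show "a = a'"
    proof (rule ccontr)
      assume "a \<noteq> a'"
      hence "d a a' > \<epsilon>" using A(2) a unfolding distinguishable_def by blast
      moreover have "d a (g a) < \<epsilon>/2" "d a' (g a) < \<epsilon>/2" "g a \<in> M" "a \<in> M" "a' \<in> M"
        using g[OF a(1)] g[OF a(2)] a(3) by (auto simp: mball_def)
      ultimately show False using triangle'[of a "g a" a'] by linarith
    qed
  qed
  thus ?thesis using card_of_ordLeq g by blast
qed

text \<open>A maximal \<epsilon>-distinguishable subset of W is an \<epsilon>-net of W: a point of W at
  distance > \<epsilon> from all of A could be added to A.\<close>
lemma maximal_distinguishable_is_net:
  assumes WM: "W \<subseteq> M" and A: "maximal_distinguishable d \<epsilon> W A" and e: "0 \<le> \<epsilon>"
  shows "is_net M d \<epsilon> W A"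
  unfolding is_net_def
proof
  fix w assume w: "w \<in> W"
  have AW: "A \<subseteq> W" and dA: "distinguishable d \<epsilon> A"
    and mx: "\<And>B. A \<subseteq> B \<Longrightarrow> B \<subseteq> W \<Longrightarrow> distinguishable d \<epsilon> B \<Longrightarrow> B = A"
    using A unfolding maximal_distinguishable_def by auto
  show "w \<in> (\<Union>c\<in>A. cball_d M d c \<epsilon>)"
  proof (cases "w \<in> A")
    case True
    thus ?thesis using w WM e unfolding cball_d_def by force
  next
    case False
    hence "\<not> distinguishable d \<epsilon> (insert w A)" using mx[of "insert w A"] AW w by blast
    then obtain a where "a \<in> A" "d w a \<le> \<epsilon>"
      using dA commute unfolding distinguishable_def by (metis insert_iff not_less)
    thus ?thesis using w WM unfolding cball_d_def by blast
  qed
qed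

text \<open>Nets of radii tending to 0 yield a dense subset of W that is no larger: replace
  every centre whose ball meets W by one point of W in that ball.\<close>
lemma dense_subset_from_nets:
  assumes WM: "W \<subseteq> M" and e: "\<And>n. e n < inverse (real (Suc n))"
    and C: "\<And>n. C n \<subseteq> M" "\<And>n. is_net M d (e n) W (C n)"
  obtains E where "\<And>n. |E n| \<le>o |C n|" and "dense_in mtopology W (\<Union>n. E n)"
proof -
  define p where "p n c = (SOME w. w \<in> W \<and> w \<in> cball_d M d c (e n))" for n c
  define E where "E n = p n ` {c \<in> C n. \<exists>w\<in>W. w \<in> cball_d M d c (e n)}" for n
  have p: "p n c \<in> W \<and> p n c \<in> cball_d M d c (e n)" if "w \<in> W" "w \<in> cball_d M d c (e n)" for n c w
    unfolding p_def by (rule someI[of _ w]) (use that in blast)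
  have "|E n| \<le>o |C n|" for n
    unfolding E_def by (rule ordLeq_transitive[OF card_of_image card_of_mono1]) blast
  moreover have "W \<subseteq> mtopology closure_of (\<Union>n. E n)"
  proof
    fix w assume w: "w \<in> W"
    have "\<exists>y\<in>(\<Union>n. E n). y \<in> mball w r" if r: "r > 0" for r
    proof -
      obtain n where n: "inverse (real (Suc n)) < r/2" using reals_Archimedean[of "r/2"] r by auto
      obtain c where c: "c \<in> C n" "w \<in> cball_d M d c (e n)"
        using C(2)[of n] w unfolding is_net_def by blast
      have pc: "p n c \<in> W" "p n c \<in> cball_d M d c (e n)" using p[OF w c(2)] by auto
      have "d w (p n c) \<le> d w c + d (p n c) c"
        using triangle'[of w c "p n c"] c pc C(1)[of n] unfolding cball_d_def by auto
      also have "\<dots> \<le> e n + e n" using c pc unfolding cball_d_def by auto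
      also have "\<dots> < r" using e[of n] n by linarith
      finally have "p n c \<in> mball w r" using w WM pc unfolding cball_d_def by auto
      moreover have "p n c \<in> E n" unfolding E_def using c w by blast
      ultimately show ?thesis by blast
    qed
    thus "w \<in> mtopology closure_of (\<Union>n. E n)" using w WM by (auto simp: metric_closure_of)
  qed
  moreover have "(\<Union>n. E n) \<subseteq> W" unfolding E_def using p by blast
  ultimately show ?thesis using that unfolding dense_in_def by blast
qed

text \<open>Else
  nets of size < \<kappa> at radii \<rightarrow> 0 would give a dense set of size < \<kappa>.\<close>
lemma nets_eventually_large:
  assumes WM: "W \<subseteq> M" and uc: "uncountable_cofinality \<kappa>" and co: "Card_order \<kappa>"
    and least: "\<And>D'. dense_in mtopology W D' \<Longrightarrow> \<kappa> \<le>o |D'|"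
  shows "\<exists>\<epsilon>0>0. \<forall>\<epsilon> C. \<epsilon> < \<epsilon>0 \<and> C \<subseteq> M \<and> is_net M d \<epsilon> W C \<longrightarrow> \<kappa> \<le>o |C|"
proof (rule ccontr)
  assume "\<not> ?thesis"
  hence "\<forall>n. \<exists>e C. e < inverse (real (Suc n)) \<and> C \<subseteq> M \<and> is_net M d e W C \<and> \<not> \<kappa> \<le>o |C|"
    by (metis of_nat_0_less_iff positive_imp_inverse_positive zero_less_Suc)
  then obtain e C where e: "\<And>n. e n < inverse (real (Suc n))"
    and C: "\<And>n. C n \<subseteq> M" "\<And>n. is_net M d (e n) W (C n)" and small: "\<And>n. \<not> \<kappa> \<le>o |C n|"
    by metis
  obtain E where E: "\<And>n. |E n| \<le>o |C n|" and dense: "dense_in mtopology W (\<Union>n. E n)"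
    using dense_subset_from_nets[OF WM e C] by blast
  have "|C n| <o \<kappa>" for n
    using small[of n] not_ordLeq_iff_ordLess[OF card_of_Well_order card_order_on_well_order_on[OF co]]
    by blast
  hence "|\<Union>n. E n| <o \<kappa>"
    using countable_union_ordLess_uncountable_cofinality[OF uc co] E ordLeq_ordLess_trans by blast
  thus False using least[OF dense] not_ordLess_ordLeq by blast
qed

text \<open>The squeeze: if \<kappa> bounds every \<epsilon>-distinguishable subset of W from above and
  every \<epsilon>-net of W from below, all four invariants equal \<kappa>, because a maximal
  \<epsilon>-distinguishable set A0 is an \<epsilon>-net and so attains both bounds.\<close>
lemma invariants_equal_squeeze:
  fixes \<kappa> :: "'a rel"
  assumes WM: "W \<subseteq> M" and e: "0 \<le> \<epsilon>" and co: "Card_order \<kappa>"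
    and packing: "\<And>A. A \<subseteq> W \<Longrightarrow> distinguishable d \<epsilon> A \<Longrightarrow> |A| \<le>o \<kappa>"
    and covering: "\<And>C. C \<subseteq> M \<Longrightarrow> is_net M d \<epsilon> W C \<Longrightarrow> \<kappa> \<le>o |C|"
  shows "invariants_equal M d \<epsilon> W \<kappa>"
  unfolding invariants_equal_def
proof (intro conjI)
  obtain A0 where A0: "maximal_distinguishable d \<epsilon> W A0"
    using maximal_distinguishable_exists by blast
  have A0W: "A0 \<subseteq> W" and A0d: "distinguishable d \<epsilon> A0"
    using A0 unfolding maximal_distinguishable_def by auto
  have A0net: "is_net M d \<epsilon> W A0" by (rule maximal_distinguishable_is_net[OF WM A0 e])
  have A0le: "|A0| \<le>o \<kappa>" by (rule packing[OF A0W A0d])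
  have A0ge: "\<kappa> \<le>o |A0|" using covering A0W WM A0net by blast
  have N: "(N_hat M d \<epsilon> A W, \<kappa>) \<in> ordIso" if WA: "W \<subseteq> A" and AM: "A \<subseteq> M" for A
    unfolding N_hat_def conj_assoc[symmetric]
  proof (rule least_card_eq)
    show "A0 \<subseteq> A \<and> is_net M d \<epsilon> W A0" using WA A0W A0net by blast
    show "|A0| \<le>o \<kappa>" by (rule A0le)
    show "\<kappa> \<le>o |C|" if "C \<subseteq> A \<and> is_net M d \<epsilon> W C" for C
      using covering[of C] that AM by blast
  qed
  show "(N_hat M d \<epsilon> W W, \<kappa>) \<in> ordIso" by (rule N[OF order_refl WM])
  show "(N_hat M d \<epsilon> M W, \<kappa>) \<in> ordIso" by (rule N[OF WM order_refl])
  show "(M_hat d \<epsilon> W, \<kappa>) \<in> ordIso"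
    unfolding M_hat_def
  proof (rule least_card_eq[where P = "maximal_distinguishable d \<epsilon> W", OF A0 A0le])
    fix B assume B: "maximal_distinguishable d \<epsilon> W B"
    hence "B \<subseteq> M" using WM unfolding maximal_distinguishable_def by blast
    thus "\<kappa> \<le>o |B|" using covering maximal_distinguishable_is_net[OF WM B e] by blast
  qed
  show "(M_star d \<epsilon> W, \<kappa>) \<in> ordIso" by (rule M_star_eq[OF co packing A0W A0d A0ge])
qed

lemma invariants_equal_den_small_scale:
  assumes WM: "W \<subseteq> M" and uc: "uncountable_cofinality (den mtopology W)"
  shows "\<forall>\<^sub>F \<epsilon> in at_right 0. invariants_equal M d \<epsilon> W (den mtopology W)"
proof -
  obtain D0 where D0: "dense_in mtopology W D0" "den mtopology W = |D0|"
    and least: "\<And>D'. dense_in mtopology W D' \<Longrightarrow> den mtopology W \<le>o |D'|"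
    using den_witness[of W mtopology] WM by auto
  have co: "Card_order (den mtopology W)" using D0(2) card_of_Card_order by simp
  obtain \<epsilon>0 where "\<epsilon>0 > 0"
    and covering: "\<And>\<epsilon> C. \<epsilon> < \<epsilon>0 \<Longrightarrow> C \<subseteq> M \<Longrightarrow> is_net M d \<epsilon> W C \<Longrightarrow> den mtopology W \<le>o |C|"
    using nets_eventually_large[OF WM uc co least] by blast
  have packing: "|A| \<le>o den mtopology W" if "0 < \<epsilon>" "A \<subseteq> W" "distinguishable d \<epsilon> A" for \<epsilon> A
    using distinguishable_card_le_dense[of \<epsilon> A D0] that D0 unfolding dense_in_def by auto
  have "invariants_equal M d \<epsilon> W (den mtopology W)" if e: "0 < \<epsilon>" "\<epsilon> < \<epsilon>0" for \<epsilon>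
    by (rule invariants_equal_squeeze[OF WM less_imp_le[OF e(1)] co packing[OF e(1)] covering[OF e(2)]])
  thus ?thesis unfolding eventually_at_right_field using \<open>\<epsilon>0 > 0\<close> by blast
qed

end

lemma invariants_equal_same:
  assumes "invariants_equal X d1 \<epsilon> W \<kappa>" and "invariants_equal X d2 \<epsilon> W \<kappa>"
  shows "(N_hat X d1 \<epsilon> W W, N_hat X d2 \<epsilon> W W) \<in> ordIso \<and>
    (N_hat X d1 \<epsilon> X W, N_hat X d2 \<epsilon> X W) \<in> ordIso \<and>
    (M_hat d1 \<epsilon> W, M_hat d2 \<epsilon> W) \<in> ordIso \<and> (M_star d1 \<epsilon> W, M_star d2 \<epsilon> W) \<in> ordIso"
  using assms ordIso_transitive ordIso_symmetric unfolding invariants_equal_def by meson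

theorem corollary2p12:
  fixes T :: "'a topology" and W :: "'a set" and D :: "('a \<Rightarrow> 'a \<Rightarrow> real) set"
  assumes "metrizable_space T"
    and "W \<subseteq> topspace T"
    and "uncountable_cofinality (den T W)"
    and "finite D"
    and "\<forall>d\<in>D. Metric_space (topspace T) d \<and> Metric_space.mtopology (topspace T) d = T"
  shows "\<exists>\<epsilon>0 > 0. \<forall>\<epsilon>. 0 < \<epsilon> \<and> \<epsilon> < \<epsilon>0 \<longrightarrow> (\<forall>d1\<in>D. \<forall>d2\<in>D.
            (N_hat (topspace T) d1 \<epsilon> W W, N_hat (topspace T) d2 \<epsilon> W W) \<in> ordIso \<and>
            (N_hat (topspace T) d1 \<epsilon> (topspace T) W, N_hat (topspace T) d2 \<epsilon> (topspace T) W) \<in> ordIso \<and>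
            (M_hat d1 \<epsilon> W, M_hat d2 \<epsilon> W) \<in> ordIso \<and>
            (M_star d1 \<epsilon> W, M_star d2 \<epsilon> W) \<in> ordIso)"
proof -
  let ?X = "topspace T"
  have "\<forall>\<^sub>F \<epsilon> in at_right 0. invariants_equal ?X d \<epsilon> W (den T W)" if d: "d \<in> D" for d
  proof -
    interpret Metric_space ?X d using assms(5) d by blast
    have "mtopology = T" using assms(5) d by blast
    thus ?thesis using invariants_equal_den_small_scale[OF assms(2)] assms(3) by simp
  qed
  hence "\<forall>\<^sub>F \<epsilon> in at_right 0. \<forall>d\<in>D. invariants_equal ?X d \<epsilon> W (den T W)"
    by (intro eventually_ball_finite[OF assms(4)]) blast
  then obtain \<epsilon>0 :: real where "\<epsilon>0 > 0"
    and small: "\<And>\<epsilon>. 0 < \<epsilon> \<Longrightarrow> \<epsilon> < \<epsilon>0 \<Longrightarrow> \<forall>d\<in>D. invariants_equal ?X d \<epsilon> W (den T W)"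
    unfolding eventually_at_right_field by blast
  show ?thesis
    using \<open>\<epsilon>0 > 0\<close> small invariants_equal_same by blast
qed

end
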